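(* For all $M\geq 2$: (1) $g(M)=F_M+\sum_{k=1}^{M-1}F_kF_{M-k}$; (2) $h(M)=F_M+\sum_{k=1}^{M-2}F_kF_{M-1-k}$; (3) $g_1(M)=h_1(M)=\sum_{k=1}^{M-1}F_kF_{M-k}$; (4) $g(M)-h(M)=g_1(M)-g_1(M-1)=h_1(M)-h_1(M-1)=F_{M-1}+\sum_{k=1}^{M-3}F_kF_{M-2-k}$ (with $g_1(0)=h_1(0)=0$ if needed, and empty sums equal to $0$).
   Context: $F_k$ denotes the Fibonacci numbers with $F_{-1}=1$, $F_0=0$, $F_1=1$, $F_k=F_{k-1}+F_{k-2}$. The perimeter of a nonempty partition $\lambda$ with largest part $\lambda_1$ and $\ell(\lambda)$ parts is $\lambda_1+\ell(\lambda)-1$. $\mathcal G(M)$ is the set of partitions into odd parts with perimeter $M$, $\mathcal H(M)$ the set of partitions into distinct parts with perimeter $M$; $g(M)$ (resp. $h(M)$) is the total number of parts, summed over all partitions in $\mathcal G(M)$ (resp. $\mathcal H(M)$). $\mathcal G_1(M)$ is the set of partitions with perimeter $M$ in which exactly one distinct even integer occurs as a part (possibly with multiplicity greater than one) and all other parts are odd; $\mathcal H_1(M)$ is the set of partitions with perimeter $M$ in which exactly one part value occurs at least twice and every other part value occurs exactly once. $g_1(M)=|\mathcal G_1(M)|$, $h_1(M)=|\mathcal H_1(M)|$. *)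

theory Defs
  imports "HOL-Library.Multiset" "HOL-Number_Theory.Fib"
begin

text \<open>A (nonempty) partition is a nonempty finite multiset of positive integers.
  Fibonacci numbers F_k are the library's fib k (fib 0 = 0, fib 1 = 1).\<close>

definition is_partition :: "nat multiset \<Rightarrow> bool" where
  "is_partition p \<longleftrightarrow> p \<noteq> {#} \<and> (\<forall>x\<in>#p. 0 < x)"

definition perimeter :: "nat multiset \<Rightarrow> nat" where
  "perimeter p = Max_mset p + size p - 1"

definition Gset :: "nat \<Rightarrow> nat multiset set" where
  "Gset M = {p. is_partition p \<and> (\<forall>x\<in>#p. odd x) \<and> perimeter p = M}"

definition Hset :: "nat \<Rightarrow> nat multiset set" where
  "Hset M = {p. is_partition p \<and> (\<forall>x\<in>#p. count p x = 1) \<and> perimeter p = M}"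

definition G1set :: "nat \<Rightarrow> nat multiset set" where
  "G1set M = {p. is_partition p \<and> perimeter p = M \<and>
      (\<exists>!e. e \<in># p \<and> even e)}"

definition H1set :: "nat \<Rightarrow> nat multiset set" where
  "H1set M = {p. is_partition p \<and> perimeter p = M \<and>
      (\<exists>!v. v \<in># p \<and> 2 \<le> count p v)}"

definition g :: "nat \<Rightarrow> nat" where "g M = (\<Sum>p\<in>Gset M. size p)"
definition h :: "nat \<Rightarrow> nat" where "h M = (\<Sum>p\<in>Hset M. size p)"
definition g1 :: "nat \<Rightarrow> nat" where "g1 M = card (G1set M)"
definition h1 :: "nat \<Rightarrow> nat" where "h1 M = card (H1set M)"

end

theory Submission
  imports Defs
begin

text \<open>Each family is split according to its smallest parts. A partition into odd parts of
  perimeter M either contains 1, and deleting one 1 leaves such a partition of perimeter M - 1,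
  or all its parts are at least 3, and subtracting 2 from every part leaves one of perimeter M - 2.
  For distinct parts one deletes the part 1 and subtracts 1 from the remaining parts, or only
  subtracts 1. Hence |G(M)| = |H(M)| = F_M, g(M) = g(M-1) + g(M-2) + F_(M-1) and
  h(M) = h(M-1) + h(M-2) + F_(M-2). For G_1 and H_1 the same operations are bijective except on
  one residual class (the even part is 2 and 1 is not a part, resp. the repeated part is 1), which
  is in turn counted by F_(M-1). So g_1 and h_1 both satisfy
  a(M) = a(M-1) + a(M-2) + F_(M-1) with a(0) = a(1) = 0, the recurrence of the convolution
  of F with itself; part (4) of the theorem is this recurrence.\<close>

definition shift :: "nat \<Rightarrow> nat multiset \<Rightarrow> nat multiset" where
  "shift k p = image_mset (\<lambda>x. x + k) p"

lemma set_mset_shift [simp]: "set_mset (shift k p) = (\<lambda>x. x + k) ` set_mset p"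
  by (simp add: shift_def)

lemma count_shift [simp]: "count (shift k p) (x + k) = count p x"
  by (induction p) (auto simp: shift_def)

lemma shift_eq_empty_iff [simp]: "shift k p = {#} \<longleftrightarrow> p = {#}"
  by (simp add: shift_def)

lemma shift_empty [simp]: "shift k {#} = {#}"
  by (simp add: shift_def)

lemma size_shift [simp]: "size (shift k p) = size p"
  by (simp add: shift_def)

lemma inj_shift: "inj (shift k)"
proof (rule injI)
  fix p q assume "shift k p = shift k q"
  then have "count (shift k p) (x + k) = count (shift k q) (x + k)" for x by simp
  then show "p = q" by (simp add: multiset_eq_iff)
qed

lemma Max_shift: "p \<noteq> {#} \<Longrightarrow> Max_mset (shift k p) = Max_mset p + k"
  using mono_Max_commute[of "\<lambda>x. x + k" "set_mset p"] by (simp add: mono_def)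

lemma Ex1_mem_shift_iff: "(\<exists>!e. e \<in># shift k p \<and> P e) \<longleftrightarrow> (\<exists>!y. y \<in># p \<and> P (y + k))"
proof
  assume "\<exists>!e. e \<in># shift k p \<and> P e"
  then obtain e where e: "e \<in># shift k p" "P e"
    and unique: "\<And>e'. e' \<in># shift k p \<Longrightarrow> P e' \<Longrightarrow> e' = e" by blast
  from e obtain y where y: "y \<in># p" "e = y + k" by auto
  show "\<exists>!y. y \<in># p \<and> P (y + k)"
  proof (rule ex1I)
    show "y \<in># p \<and> P (y + k)" using e y by simp
    fix z assume "z \<in># p \<and> P (z + k)"
    then have "z + k = e" using unique by simp
    then show "z = y" using y by simp
  qed
next
  assume "\<exists>!y. y \<in># p \<and> P (y + k)"
  then obtain y where y: "y \<in># p" "P (y + k)"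
    and unique: "\<And>z. z \<in># p \<Longrightarrow> P (z + k) \<Longrightarrow> z = y" by blast
  show "\<exists>!e. e \<in># shift k p \<and> P e"
  proof (rule ex1I)
    show "y + k \<in># shift k p \<and> P (y + k)" using y by simp
    fix e assume "e \<in># shift k p \<and> P e"
    then show "e = y + k" using unique by auto
  qed
qed

lemma image_shift_eqI:
  assumes large: "\<And>p. p \<in> T \<Longrightarrow> \<forall>x\<in>#p. k < x"
    and shift_iff: "\<And>q. \<forall>x\<in>#q. 0 < x \<Longrightarrow> shift k q \<in> T \<longleftrightarrow> q \<in> S"
    and pos: "\<And>q. q \<in> S \<Longrightarrow> \<forall>x\<in>#q. 0 < x"
  shows "T = shift k ` S"
proof (intro equalityI subsetI)
  fix p assume "p \<in> T"
  define q where "q = image_mset (\<lambda>x. x - k) p"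
  have "shift k q = image_mset id p"
    unfolding q_def shift_def multiset.map_comp
    by (rule image_mset_cong) (use large[OF \<open>p \<in> T\<close>] in auto)
  then have "shift k q = p" by simp
  moreover have "\<forall>x\<in>#q. 0 < x"
    using large[OF \<open>p \<in> T\<close>] by (auto simp: q_def)
  ultimately show "p \<in> shift k ` S"
    using shift_iff \<open>p \<in> T\<close> by blast
qed (use shift_iff pos in blast)

lemma image_add_mset_eqI:
  assumes "\<And>p. p \<in> T \<Longrightarrow> x \<in># p" and "\<And>q. add_mset x q \<in> T \<longleftrightarrow> q \<in> S"
  shows "T = add_mset x ` S"
proof (intro equalityI subsetI)
  fix p assume "p \<in> T"
  then have "add_mset x (p - {#x#}) \<in> T" using assms(1) by simp
  then show "p \<in> add_mset x ` S"
    using assms \<open>p \<in> T\<close> by (metis image_eqI insert_DiffM)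
qed (use assms(2) in blast)

lemma Ex1_imp_eq: "\<exists>!x. P x \<Longrightarrow> P a \<Longrightarrow> P b \<Longrightarrow> a = b"
  by (erule ex1E) blast

lemma inj_on_add_mset: "inj_on (add_mset x) A"
  by (simp add: inj_on_def)

lemma Ex1_mem_add_mset_iff:
  "\<not> P x \<Longrightarrow> (\<exists>!e. e \<in># add_mset x q \<and> P e) \<longleftrightarrow> (\<exists>!e. e \<in># q \<and> P e)"
proof -
  assume "\<not> P x"
  then have "e \<in># add_mset x q \<and> P e \<longleftrightarrow> e \<in># q \<and> P e" for e by auto
  then show ?thesis by simp
qed

lemma counts_one_add_mset_iff:
  "(\<forall>y\<in>#add_mset x q. count (add_mset x q) y = 1) \<longleftrightarrow> x \<notin># q \<and> (\<forall>y\<in>#q. count q y = 1)"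
proof
  assume counts: "\<forall>y\<in>#add_mset x q. count (add_mset x q) y = 1"
  then have "x \<notin># q" by (simp add: not_in_iff)
  moreover have "count q y = 1" if "y \<in># q" for y
  proof -
    from that \<open>x \<notin># q\<close> have "y \<noteq> x" by blast
    with bspec[OF counts, of y] that show ?thesis by simp
  qed
  ultimately show "x \<notin># q \<and> (\<forall>y\<in>#q. count q y = 1)" by blast
qed (auto simp: not_in_iff)

lemma partition_part_pos: "is_partition p \<Longrightarrow> x \<in># p \<Longrightarrow> 0 < x"
  by (simp add: is_partition_def)

lemma partition_without_one: "is_partition p \<Longrightarrow> 1 \<notin># p \<Longrightarrow> \<forall>x\<in>#p. 1 < x"
  using partition_part_pos by (metis less_one nat_neq_iff)

lemma perimeter_singleton [simp]: "perimeter {#x#} = x"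
  by (simp add: perimeter_def)

lemma perimeter_shift: "p \<noteq> {#} \<Longrightarrow> perimeter (shift k p) = perimeter p + k"
  using Max_shift[of p k] by (simp add: perimeter_def nonempty_has_size del: set_mset_shift)

lemma perimeter_add_mset:
  "p \<noteq> {#} \<Longrightarrow> x \<le> Max_mset p \<Longrightarrow> perimeter (add_mset x p) = Suc (perimeter p)"
  by (simp add: perimeter_def Max_insert max_def nonempty_has_size)

lemma part_le_perimeter: "x \<in># p \<Longrightarrow> x \<le> perimeter p"
proof -
  assume "x \<in># p"
  then have "x \<le> Max_mset p" "p \<noteq> {#}" by auto
  then show ?thesis by (simp add: perimeter_def nonempty_has_size)
qed

lemma Max_partition_pos: "is_partition p \<Longrightarrow> 0 < Max_mset p"
  by (simp add: is_partition_def)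

lemma size_le_perimeter: "is_partition p \<Longrightarrow> size p \<le> perimeter p"
  using Max_partition_pos[of p] by (simp add: perimeter_def)

lemma perimeter_pos: "is_partition p \<Longrightarrow> 0 < perimeter p"
  using size_le_perimeter[of p] by (simp add: is_partition_def nonempty_has_size)

lemma partition_perimeter_one: "is_partition p \<Longrightarrow> perimeter p = 1 \<Longrightarrow> p = {#1#}"
proof -
  assume p: "is_partition p" "perimeter p = 1"
  then have "0 < Max_mset p" "0 < size p"
    by (simp_all add: Max_partition_pos is_partition_def nonempty_has_size)
  with p(2) have "Max_mset p = 1" "size p = 1" by (auto simp: perimeter_def)
  moreover obtain x where "p = {#x#}" using \<open>size p = 1\<close> size_1_singleton_mset by blast
  ultimately show ?thesis by simp
qed

lemma partition_add_one_iff: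
  assumes "0 < M"
  shows "is_partition (add_mset 1 q) \<and> perimeter (add_mset 1 q) = Suc M \<longleftrightarrow>
    is_partition q \<and> perimeter q = M"
proof (cases "is_partition q")
  case True
  then have "1 \<le> Max_mset q" by (simp add: is_partition_def Suc_le_eq)
  then have "perimeter (add_mset 1 q) = Suc (perimeter q)"
    using True by (intro perimeter_add_mset) (simp_all add: is_partition_def)
  with True show ?thesis by (simp add: is_partition_def)
qed (use assms in \<open>auto simp: is_partition_def\<close>)

lemma partition_shift_iff:
  assumes "\<forall>x\<in>#q. 0 < x"
  shows "is_partition (shift k q) \<and> perimeter (shift k q) = M + k \<longleftrightarrow>
    is_partition q \<and> perimeter q = M"
  using assms by (auto simp: perimeter_shift is_partition_def)

lemma finite_partitions: "finite {p. is_partition p \<and> perimeter p = M}"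
proof (rule finite_subset)
  show "{p. is_partition p \<and> perimeter p = M} \<subseteq> (\<Union>n\<le>M. multisets_of_size {0..M} n)"
  proof
    fix p assume "p \<in> {p. is_partition p \<and> perimeter p = M}"
    then have p: "is_partition p" "perimeter p = M" by auto
    then have "set_mset p \<subseteq> {0..M}" using part_le_perimeter by auto
    moreover have "size p \<le> M" using p size_le_perimeter by blast
    ultimately show "p \<in> (\<Union>n\<le>M. multisets_of_size {0..M} n)"
      by (auto simp: multisets_of_size_def)
  qed
qed auto

section \<open>Recurrences and the Fibonacci convolution\<close>

lemma card_filter_split: "finite S \<Longrightarrow> card S = card {p \<in> S. P p} + card {p \<in> S. \<not> P p}"
  using card_Int_Diff[of S "{p. P p}"] by (simp add: Int_def set_diff_eq)

lemma sum_filter_split: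
  "finite S \<Longrightarrow> sum f S = sum f {p \<in> S. P p} + sum f {p \<in> S. \<not> P p}"
  using sum.Int_Diff[of S f "{p. P p}"] by (simp add: Int_def set_diff_eq)

lemma recurrence_unique:
  fixes a b c :: "nat \<Rightarrow> 'a::plus"
  assumes "a 0 = b 0" "a 1 = b 1"
    and "\<And>n. a (Suc (Suc n)) = a (Suc n) + a n + c n"
    and "\<And>n. b (Suc (Suc n)) = b (Suc n) + b n + c n"
  shows "a n = b n"
  by (induction n rule: fib.induct) (use assms in simp_all)

definition fib_conv :: "nat \<Rightarrow> nat" where
  "fib_conv n = (\<Sum>k=1..<n. fib k * fib (n - k))"

lemma fib_conv_Suc_Suc: "fib_conv (Suc (Suc n)) = fib_conv (Suc n) + fib_conv n + fib (Suc n)"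
proof -
  have "fib_conv (Suc (Suc n)) = (\<Sum>k=1..<Suc n. fib k * fib (Suc (Suc n) - k)) + fib (Suc n)"
    by (simp add: fib_conv_def)
  also have "(\<Sum>k=1..<Suc n. fib k * fib (Suc (Suc n) - k))
      = (\<Sum>k=1..<Suc n. fib k * fib (Suc n - k) + fib k * fib (n - k))"
  proof (rule sum.cong)
    fix k assume "k \<in> {1..<Suc n}"
    then have "Suc (Suc n) - k = Suc (Suc (n - k))" "Suc n - k = Suc (n - k)" by auto
    then show "fib k * fib (Suc (Suc n) - k) = fib k * fib (Suc n - k) + fib k * fib (n - k)"
      by (simp add: algebra_simps)
  qed simp
  also have "\<dots> = fib_conv (Suc n) + (\<Sum>k=1..<Suc n. fib k * fib (n - k))"
    by (simp add: sum.distrib fib_conv_def)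
  also have "(\<Sum>k=1..<Suc n. fib k * fib (n - k)) = fib_conv n"
  proof (cases n)
    case 0 then show ?thesis by (simp add: fib_conv_def)
  next
    case (Suc m)
    then have "(\<Sum>k=1..<Suc n. fib k * fib (n - k)) = (\<Sum>k=1..<n. fib k * fib (n - k)) + fib n * fib 0"
      by simp
    then show ?thesis by (simp add: fib_conv_def)
  qed
  finally show ?thesis by simp
qed

section \<open>Partitions into odd parts\<close>

lemma finite_Gset: "finite (Gset M)"
  by (rule finite_subset[OF _ finite_partitions[of M]]) (auto simp: Gset_def)

lemma Gset_0: "Gset 0 = {}"
  by (auto simp: Gset_def dest!: perimeter_pos)

lemma Gset_1: "Gset 1 = {{#1#}}"
proof (intro equalityI subsetI)
  fix p assume "p \<in> Gset 1"
  then show "p \<in> {{#1#}}" using partition_perimeter_one[of p] by (simp add: Gset_def)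
qed (simp add: Gset_def is_partition_def)

lemma add_one_in_Gset_iff: "add_mset 1 q \<in> Gset (Suc (Suc M)) \<longleftrightarrow> q \<in> Gset (Suc M)"
  using partition_add_one_iff[where M = "Suc M" and q = q] by (auto simp: Gset_def)

lemma shift_in_Gset_iff:
  "even k \<Longrightarrow> \<forall>x\<in>#q. 0 < x \<Longrightarrow> shift k q \<in> Gset (M + k) \<longleftrightarrow> q \<in> Gset M"
  using partition_shift_iff[where q = q and k = k and M = M] by (auto simp: Gset_def)

lemma Gset_with_one: "{p \<in> Gset (Suc (Suc M)). 1 \<in># p} = add_mset 1 ` Gset (Suc M)"
  using add_one_in_Gset_iff by (intro image_add_mset_eqI) auto

lemma Gset_without_one: "{p \<in> Gset (M + 2). 1 \<notin># p} = shift 2 ` Gset M"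
proof (rule image_shift_eqI)
  have "odd x \<Longrightarrow> 1 < x \<Longrightarrow> 2 < x" for x :: nat by presburger
  then show "\<forall>x\<in>#p. 2 < x" if "p \<in> {p \<in> Gset (M + 2). 1 \<notin># p}" for p
    using that partition_without_one[of p] by (auto simp: Gset_def)
  show "shift 2 q \<in> {p \<in> Gset (M + 2). 1 \<notin># p} \<longleftrightarrow> q \<in> Gset M" if "\<forall>x\<in>#q. 0 < x" for q
    using that shift_in_Gset_iff[of 2 q M] by auto
qed (auto simp: Gset_def is_partition_def)

lemma card_Gset_Suc_Suc: "card (Gset (Suc (Suc M))) = card (Gset (Suc M)) + card (Gset M)"
  using card_filter_split[OF finite_Gset, where P = "\<lambda>p. 1 \<in># p"]
    Gset_with_one Gset_without_one
  by (simp add: card_image inj_on_add_mset inj_on_subset[OF inj_shift])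

lemma card_Gset: "card (Gset n) = fib n"
proof (rule recurrence_unique[where a = "\<lambda>n. card (Gset n)" and b = fib and c = "\<lambda>_. 0"])
  show "card (Gset 1) = fib 1" unfolding Gset_1 by simp
qed (simp_all add: Gset_0 card_Gset_Suc_Suc)

lemma g_Suc_Suc: "g (Suc (Suc M)) = g (Suc M) + g M + card (Gset (Suc M))"
  using sum_filter_split[OF finite_Gset, where f = size and P = "\<lambda>p. 1 \<in># p"]
    Gset_with_one Gset_without_one
  by (simp add: g_def sum.reindex inj_on_add_mset inj_on_subset[OF inj_shift] sum_Suc)

section \<open>Partitions into distinct parts\<close>

lemma finite_Hset: "finite (Hset M)"
  by (rule finite_subset[OF _ finite_partitions[of M]]) (auto simp: Hset_def)

lemma Hset_0: "Hset 0 = {}"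
  by (auto simp: Hset_def dest!: perimeter_pos)

lemma Hset_1: "Hset 1 = {{#1#}}"
proof (intro equalityI subsetI)
  fix p assume "p \<in> Hset 1"
  then show "p \<in> {{#1#}}" using partition_perimeter_one[of p] by (simp add: Hset_def)
qed (simp add: Hset_def is_partition_def)

lemma add_one_in_Hset_iff:
  "add_mset 1 q \<in> Hset (Suc (Suc M)) \<longleftrightarrow> q \<in> Hset (Suc M) \<and> 1 \<notin># q"
  using partition_add_one_iff[where M = "Suc M" and q = q]
  unfolding Hset_def mem_Collect_eq counts_one_add_mset_iff by blast

lemma shift_in_Hset_iff:
  "\<forall>x\<in>#q. 0 < x \<Longrightarrow> shift k q \<in> Hset (M + k) \<longleftrightarrow> q \<in> Hset M"
  using partition_shift_iff[where q = q and k = k and M = M] by (auto simp: Hset_def)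

lemma Hset_without_one: "{p \<in> Hset (Suc M). 1 \<notin># p} = shift 1 ` Hset M"
proof (rule image_shift_eqI)
  show "\<forall>x\<in>#p. 1 < x" if "p \<in> {p \<in> Hset (Suc M). 1 \<notin># p}" for p
    using that partition_without_one[of p] by (simp add: Hset_def)
  show "shift 1 q \<in> {p \<in> Hset (Suc M). 1 \<notin># p} \<longleftrightarrow> q \<in> Hset M" if "\<forall>x\<in>#q. 0 < x" for q
    using that shift_in_Hset_iff[of q 1 M] by auto
qed (auto simp: Hset_def is_partition_def)

lemma Hset_with_one: "{p \<in> Hset (Suc (Suc M)). 1 \<in># p} = add_mset 1 ` shift 1 ` Hset M"
proof (rule image_add_mset_eqI)
  show "add_mset 1 q \<in> {p \<in> Hset (Suc (Suc M)). 1 \<in># p} \<longleftrightarrow> q \<in> shift 1 ` Hset M" for q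
    using add_one_in_Hset_iff[of q M] Hset_without_one[of M] by auto
qed simp

lemma card_Hset_Suc_Suc: "card (Hset (Suc (Suc M))) = card (Hset (Suc M)) + card (Hset M)"
  using card_filter_split[OF finite_Hset, where P = "\<lambda>p. 1 \<in># p"]
    Hset_with_one Hset_without_one
  by (simp add: card_image inj_on_add_mset inj_on_subset[OF inj_shift])

lemma card_Hset: "card (Hset n) = fib n"
proof (rule recurrence_unique[where a = "\<lambda>n. card (Hset n)" and b = fib and c = "\<lambda>_. 0"])
  show "card (Hset 1) = fib 1" unfolding Hset_1 by simp
qed (simp_all add: Hset_0 card_Hset_Suc_Suc)

lemma h_Suc_Suc: "h (Suc (Suc M)) = h (Suc M) + h M + card (Hset M)"
  using sum_filter_split[OF finite_Hset, where f = size and P = "\<lambda>p. 1 \<in># p"]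
    Hset_with_one Hset_without_one
  by (simp add: h_def sum.reindex inj_on_add_mset inj_on_subset[OF inj_shift] sum_Suc card_image)

section \<open>Exactly one even part value\<close>

lemma finite_G1set: "finite (G1set M)"
  by (rule finite_subset[OF _ finite_partitions[of M]]) (auto simp: G1set_def)

lemma G1set_0: "G1set 0 = {}"
  by (auto simp: G1set_def dest!: perimeter_pos)

lemma G1set_1: "G1set 1 = {}"
proof -
  have "p \<notin> G1set 1" for p
  proof
    assume "p \<in> G1set 1"
    then have "p = {#1#}" "\<exists>e. e \<in># p \<and> even e"
      using partition_perimeter_one[of p] unfolding G1set_def by blast+
    then show False by simp
  qed
  then show ?thesis by blast
qed

lemma G1set_partition: "p \<in> G1set M \<Longrightarrow> is_partition p \<and> perimeter p = M"
  by (simp add: G1set_def)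

lemma add_one_in_G1set_iff: "add_mset 1 q \<in> G1set (Suc (Suc M)) \<longleftrightarrow> q \<in> G1set (Suc M)"
proof -
  have "(\<exists>!e. e \<in># add_mset 1 q \<and> even e) \<longleftrightarrow> (\<exists>!e. e \<in># q \<and> even e)"
    by (rule Ex1_mem_add_mset_iff) simp
  then show ?thesis
    unfolding G1set_def mem_Collect_eq conj_assoc[symmetric]
    by (simp only: partition_add_one_iff[OF zero_less_Suc])
qed

lemma shift_in_G1set_iff:
  "even k \<Longrightarrow> \<forall>x\<in>#q. 0 < x \<Longrightarrow> shift k q \<in> G1set (M + k) \<longleftrightarrow> q \<in> G1set M"
proof -
  assume "even k" "\<forall>x\<in>#q. 0 < x"
  have "(\<exists>!e. e \<in># shift k q \<and> even e) \<longleftrightarrow> (\<exists>!y. y \<in># q \<and> even y)"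
    using Ex1_mem_shift_iff[where P = even] \<open>even k\<close> by simp
  then show ?thesis
    unfolding G1set_def mem_Collect_eq conj_assoc[symmetric]
    by (simp only: partition_shift_iff[OF \<open>\<forall>x\<in>#q. 0 < x\<close>])
qed

lemma G1set_with_one: "{p \<in> G1set (Suc (Suc M)). 1 \<in># p} = add_mset 1 ` G1set (Suc M)"
  using add_one_in_G1set_iff by (intro image_add_mset_eqI) auto

lemma G1set_without_one_two: "{p \<in> G1set (M + 2). 1 \<notin># p \<and> 2 \<notin># p} = shift 2 ` G1set M"
proof (rule image_shift_eqI)
  show "\<forall>x\<in>#p. 2 < x" if "p \<in> {p \<in> G1set (M + 2). 1 \<notin># p \<and> 2 \<notin># p}" for p
  proof
    fix x assume "x \<in># p"
    with that G1set_partition[of p] partition_without_one[of p] have "1 < x" "x \<noteq> 2" by auto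
    then show "2 < x" by simp
  qed
  show "shift 2 q \<in> {p \<in> G1set (M + 2). 1 \<notin># p \<and> 2 \<notin># p} \<longleftrightarrow> q \<in> G1set M"
    if "\<forall>x\<in>#q. 0 < x" for q
    using that shift_in_G1set_iff[of 2 q M] by auto
qed (use G1set_partition in \<open>auto simp: is_partition_def\<close>)

definition G1set_two :: "nat \<Rightarrow> nat multiset set" where
  "G1set_two M = {p. is_partition p \<and> perimeter p = M \<and> 2 \<in># p \<and> (\<forall>x\<in>#p. x = 2 \<or> odd x \<and> 1 < x)}"

lemma G1set_two_eq: "{p \<in> G1set M. 1 \<notin># p \<and> 2 \<in># p} = G1set_two M"
proof (intro equalityI subsetI)
  fix p assume "p \<in> {p \<in> G1set M. 1 \<notin># p \<and> 2 \<in># p}"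
  then have p: "is_partition p" "perimeter p = M" "1 \<notin># p" "2 \<in># p"
    and unique: "\<exists>!e. e \<in># p \<and> even e"
    by (simp_all add: G1set_def)
  have "x = 2 \<or> odd x \<and> 1 < x" if "x \<in># p" for x
  proof (cases "even x")
    case True
    with p(4) that show ?thesis using Ex1_imp_eq[OF unique] by simp
  next
    case False
    with that p partition_without_one show ?thesis by blast
  qed
  with p show "p \<in> G1set_two M" by (simp add: G1set_two_def)
next
  fix p assume "p \<in> G1set_two M"
  then have p: "is_partition p" "perimeter p = M" "2 \<in># p"
    and parts: "\<forall>x\<in>#p. x = 2 \<or> odd x \<and> 1 < x"
    by (simp_all add: G1set_two_def)
  have "\<exists>!e. e \<in># p \<and> even e"
    using p(3) parts by (intro ex1I[of _ 2]) auto
  moreover have "1 \<notin># p" using parts by auto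
  ultimately show "p \<in> {p \<in> G1set M. 1 \<notin># p \<and> 2 \<in># p}" using p by (simp add: G1set_def)
qed

lemma card_G1set_Suc_Suc:
  "card (G1set (Suc (Suc M))) = card (G1set (Suc M)) + card (G1set M) + card (G1set_two (Suc (Suc M)))"
proof -
  let ?S = "G1set (Suc (Suc M))"
  have "card {p \<in> ?S. 1 \<notin># p} = card {p \<in> ?S. 1 \<notin># p \<and> 2 \<in># p} + card {p \<in> ?S. 1 \<notin># p \<and> 2 \<notin># p}"
    using card_filter_split[of "{p \<in> ?S. 1 \<notin># p}" "\<lambda>p. 2 \<in># p"] finite_G1set
    by (simp add: conj_assoc)
  then show ?thesis
    using card_filter_split[OF finite_G1set, where P = "\<lambda>p. 1 \<in># p"]
      G1set_with_one G1set_without_one_two[of M] G1set_two_eq[of "Suc (Suc M)"]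
    by (simp add: card_image inj_on_add_mset inj_on_subset[OF inj_shift])
qed

lemma finite_G1set_two: "finite (G1set_two M)"
  by (rule finite_subset[OF _ finite_partitions[of M]]) (auto simp: G1set_two_def)

lemma G1set_two_1: "G1set_two 1 = {}"
  by (auto simp: G1set_two_def dest: partition_perimeter_one)

lemma G1set_two_2: "G1set_two 2 = {{#2#}}"
proof (intro equalityI subsetI)
  fix p assume "p \<in> G1set_two 2"
  then have p: "perimeter p = 2" "2 \<in># p" and parts: "\<forall>x\<in>#p. x = 2 \<or> odd x \<and> 1 < x"
    by (simp_all add: G1set_two_def)
  define r where "r = p - {#2#}"
  have pr: "p = add_mset 2 r" using p(2) by (simp add: r_def)
  have "r = {#}"
  proof (rule ccontr)
    assume "r \<noteq> {#}"
    then obtain y where y: "y \<in># r" by blast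
    with parts pr have "2 \<le> y" by auto
    then have "2 \<le> Max_mset r" using Max_ge[OF finite_set_mset y] by linarith
    with \<open>r \<noteq> {#}\<close> have "perimeter p = Suc (perimeter r)" by (simp add: pr perimeter_add_mset)
    with part_le_perimeter[OF y] \<open>2 \<le> y\<close> p(1) show False by simp
  qed
  with pr show "p \<in> {{#2#}}" by simp
qed (simp add: G1set_two_def is_partition_def)

lemma G1set_two_repeated: "{p \<in> G1set_two (Suc M). count p 2 \<noteq> 1} = add_mset 2 ` G1set_two M"
proof (rule image_add_mset_eqI)
  show "add_mset 2 q \<in> {p \<in> G1set_two (Suc M). count p 2 \<noteq> 1} \<longleftrightarrow> q \<in> G1set_two M" for q
  proof (cases "2 \<in># q")
    case True
    then have "perimeter (add_mset 2 q) = Suc (perimeter q)"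
      by (intro perimeter_add_mset) auto
    with True show ?thesis by (auto simp: G1set_two_def is_partition_def)
  qed (simp add: G1set_two_def not_in_iff)
qed (simp add: G1set_two_def)

lemma G1set_two_single:
  "{p \<in> G1set_two (Suc (Suc (Suc M))). count p 2 = 1} = add_mset 2 ` shift 2 ` Gset M"
proof (rule image_add_mset_eqI)
  let ?T = "{p \<in> G1set_two (Suc (Suc (Suc M))). count p 2 = 1}"
  have "{q. add_mset 2 q \<in> ?T} = shift 2 ` Gset M"
  proof (rule image_shift_eqI)
    show "\<forall>x\<in>#q. 2 < x" if "q \<in> {q. add_mset 2 q \<in> ?T}" for q
    proof
      fix x assume "x \<in># q"
      with that have "x \<noteq> 2" "odd x \<and> 1 < x \<or> x = 2"
        by (auto simp: G1set_two_def not_in_iff[symmetric])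
      then show "2 < x" by presburger
    qed
    show "shift 2 r \<in> {q. add_mset 2 q \<in> ?T} \<longleftrightarrow> r \<in> Gset M" if pos: "\<forall>x\<in>#r. 0 < x" for r
    proof (cases "r = {#}")
      case False
      then have "2 \<le> Max_mset (shift 2 r)" by (simp add: Max_shift del: set_mset_shift)
      with False have "perimeter (add_mset 2 (shift 2 r)) = Suc (perimeter r + 2)"
        by (simp add: perimeter_add_mset perimeter_shift)
      with False pos show ?thesis
        by (auto simp: G1set_two_def Gset_def is_partition_def not_in_iff[symmetric])
    qed (simp add: Gset_def G1set_two_def is_partition_def)
  qed (simp add: Gset_def is_partition_def)
  then show "add_mset 2 q \<in> ?T \<longleftrightarrow> q \<in> shift 2 ` Gset M" for q by blast
qed (simp add: G1set_two_def)

lemma card_G1set_two: "card (G1set_two (Suc n)) = fib n"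
proof (induction n rule: fib.induct)
  case 1
  show ?case by (simp add: G1set_two_1[simplified])
next
  case 2
  show ?case by (simp add: G1set_two_2[simplified numeral_2_eq_2])
next
  case (3 n)
  have "card (G1set_two (Suc (Suc (Suc n)))) = card (G1set_two (Suc (Suc n))) + card (Gset n)"
    using card_filter_split[OF finite_G1set_two, where P = "\<lambda>p. count p 2 = 1"]
      G1set_two_single G1set_two_repeated
    by (simp add: card_image inj_on_add_mset inj_on_subset[OF inj_shift])
  with 3 show ?case by (simp add: card_Gset)
qed

section \<open>Exactly one repeated part value\<close>

lemma finite_H1set: "finite (H1set M)"
  by (rule finite_subset[OF _ finite_partitions[of M]]) (auto simp: H1set_def)

lemma H1set_partition: "p \<in> H1set M \<Longrightarrow> is_partition p \<and> perimeter p = M"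
  by (simp add: H1set_def)

lemma H1set_0: "H1set 0 = {}"
  by (auto simp: H1set_def dest!: perimeter_pos)

lemma H1set_1: "H1set 1 = {}"
proof -
  have "p \<notin> H1set 1" for p
  proof
    assume "p \<in> H1set 1"
    then have "p = {#1#}" "\<exists>v. v \<in># p \<and> 2 \<le> count p v"
      using partition_perimeter_one[of p] unfolding H1set_def by blast+
    then show False by auto
  qed
  then show ?thesis by blast
qed

lemma add_one_in_H1set_iff:
  assumes "1 \<notin># q"
  shows "add_mset 1 q \<in> H1set (Suc (Suc M)) \<longleftrightarrow> q \<in> H1set (Suc M)"
proof -
  have "v \<in># add_mset 1 q \<and> 2 \<le> count (add_mset 1 q) v \<longleftrightarrow> v \<in># q \<and> 2 \<le> count q v" for v
    using assms by (auto simp: not_in_iff)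
  then have "(\<exists>!v. v \<in># add_mset 1 q \<and> 2 \<le> count (add_mset 1 q) v) \<longleftrightarrow>
      (\<exists>!v. v \<in># q \<and> 2 \<le> count q v)"
    by simp
  then show ?thesis
    unfolding H1set_def mem_Collect_eq conj_assoc[symmetric]
    by (simp only: partition_add_one_iff[OF zero_less_Suc])
qed

lemma shift_in_H1set_iff:
  assumes "\<forall>x\<in>#q. 0 < x"
  shows "shift k q \<in> H1set (M + k) \<longleftrightarrow> q \<in> H1set M"
proof -
  have "(\<exists>!v. v \<in># shift k q \<and> 2 \<le> count (shift k q) v) \<longleftrightarrow> (\<exists>!y. y \<in># q \<and> 2 \<le> count q y)"
    using Ex1_mem_shift_iff[where P = "\<lambda>v. 2 \<le> count (shift k q) v"] by simp
  then show ?thesis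
    unfolding H1set_def mem_Collect_eq conj_assoc[symmetric]
    by (simp only: partition_shift_iff[OF assms])
qed

lemma H1set_without_one: "{p \<in> H1set (Suc M). 1 \<notin># p} = shift 1 ` H1set M"
proof (rule image_shift_eqI)
  show "\<forall>x\<in>#p. 1 < x" if "p \<in> {p \<in> H1set (Suc M). 1 \<notin># p}" for p
    using that H1set_partition[of p] partition_without_one[of p] by blast
  show "shift 1 q \<in> {p \<in> H1set (Suc M). 1 \<notin># p} \<longleftrightarrow> q \<in> H1set M" if "\<forall>x\<in>#q. 0 < x" for q
    using that shift_in_H1set_iff[of q 1 M] by auto
qed (use H1set_partition in \<open>auto simp: is_partition_def\<close>)

lemma H1set_one_once:
  "{p \<in> H1set (Suc (Suc M)). count p 1 = 1} = add_mset 1 ` shift 1 ` H1set M"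
proof (rule image_add_mset_eqI)
  have "add_mset 1 q \<in> {p \<in> H1set (Suc (Suc M)). count p 1 = 1} \<longleftrightarrow>
      q \<in> {p \<in> H1set (Suc M). 1 \<notin># p}" for q
    using add_one_in_H1set_iff[of q M] by (auto simp: not_in_iff)
  then show "add_mset 1 q \<in> {p \<in> H1set (Suc (Suc M)). count p 1 = 1} \<longleftrightarrow> q \<in> shift 1 ` H1set M"
    for q
    by (simp only: H1set_without_one)
qed (auto intro: count_inI)

definition H1set_one :: "nat \<Rightarrow> nat multiset set" where
  "H1set_one M = {p. is_partition p \<and> perimeter p = M \<and> 1 < count p 1 \<and>
      (\<forall>x\<in>#p. x \<noteq> 1 \<longrightarrow> count p x = 1)}"

lemma H1set_one_eq: "{p \<in> H1set M. 1 < count p 1} = H1set_one M"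
proof (intro equalityI subsetI)
  fix p assume "p \<in> {p \<in> H1set M. 1 < count p 1}"
  then have p: "is_partition p" "perimeter p = M" "1 < count p 1"
    and unique: "\<exists>!v. v \<in># p \<and> 2 \<le> count p v"
    by (simp_all add: H1set_def)
  have "count p x = 1" if "x \<in># p" "x \<noteq> 1" for x
  proof (rule ccontr)
    assume "count p x \<noteq> 1"
    moreover from that have "0 < count p x" by simp
    ultimately have "2 \<le> count p x" by linarith
    moreover have "1 \<in># p" "2 \<le> count p 1" using p(3) by (auto intro: count_inI)
    ultimately have "x = 1" using that(1) Ex1_imp_eq[OF unique] by blast
    with that(2) show False ..
  qed
  with p show "p \<in> H1set_one M" by (simp add: H1set_one_def)
next
  fix p assume "p \<in> H1set_one M"
  then have p: "is_partition p" "perimeter p = M" "1 < count p 1"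
    and once: "\<forall>x\<in>#p. x \<noteq> 1 \<longrightarrow> count p x = 1"
    by (simp_all add: H1set_one_def)
  have "\<exists>!v. v \<in># p \<and> 2 \<le> count p v"
    using p(3) once by (intro ex1I[of _ 1]) (auto intro: count_inI)
  with p show "p \<in> {p \<in> H1set M. 1 < count p 1}" by (simp add: H1set_def)
qed

lemma card_H1set_Suc_Suc:
  "card (H1set (Suc (Suc M))) = card (H1set (Suc M)) + card (H1set M) + card (H1set_one (Suc (Suc M)))"
proof -
  let ?S = "H1set (Suc (Suc M))"
  have "{p \<in> {p \<in> ?S. count p 1 \<noteq> 1}. 1 \<in># p} = {p \<in> ?S. 1 < count p 1}"
    by (auto intro: Suc_lessI count_inI)
  moreover have "{p \<in> {p \<in> ?S. count p 1 \<noteq> 1}. 1 \<notin># p} = {p \<in> ?S. 1 \<notin># p}"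
    by (auto simp: not_in_iff)
  ultimately have "card {p \<in> ?S. count p 1 \<noteq> 1} = card {p \<in> ?S. 1 < count p 1} + card {p \<in> ?S. 1 \<notin># p}"
    using card_filter_split[of "{p \<in> ?S. count p 1 \<noteq> 1}" "\<lambda>p. 1 \<in># p"] finite_H1set by simp
  then show ?thesis
    using card_filter_split[OF finite_H1set, where P = "\<lambda>p. count p 1 = 1"]
      H1set_one_once H1set_without_one H1set_one_eq[of "Suc (Suc M)"]
    by (simp add: card_image inj_on_add_mset inj_on_subset[OF inj_shift])
qed

lemma finite_H1set_one: "finite (H1set_one M)"
  by (rule finite_subset[OF _ finite_partitions[of M]]) (auto simp: H1set_one_def)

lemma H1set_one_1: "H1set_one 1 = {}"
  by (auto simp: H1set_one_def dest: partition_perimeter_one)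

lemma H1set_one_Suc: "H1set_one (Suc M) = add_mset 1 ` ({q \<in> Hset M. 1 \<in># q} \<union> H1set_one M)"
proof (rule image_add_mset_eqI)
  show "add_mset 1 q \<in> H1set_one (Suc M) \<longleftrightarrow> q \<in> {q \<in> Hset M. 1 \<in># q} \<union> H1set_one M" for q
  proof (cases "1 \<in># q")
    case True
    then have "perimeter (add_mset 1 q) = Suc (perimeter q)"
      by (intro perimeter_add_mset) auto
    moreover from True have "count q 1 = 1 \<or> 1 < count q 1"
      using count_greater_zero_iff[of q 1] by linarith
    ultimately show ?thesis
      using True by (auto simp: H1set_one_def Hset_def is_partition_def)
  qed (auto simp: H1set_one_def Hset_def not_in_iff)
qed (auto simp: H1set_one_def intro: count_inI)

lemma card_H1set_one_Suc:
  "card (H1set_one (Suc M)) = card {q \<in> Hset M. 1 \<in># q} + card (H1set_one M)"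
proof -
  have "card (H1set_one (Suc M)) = card ({q \<in> Hset M. 1 \<in># q} \<union> H1set_one M)"
    unfolding H1set_one_Suc by (rule card_image[OF inj_on_add_mset])
  also have "\<dots> = card {q \<in> Hset M. 1 \<in># q} + card (H1set_one M)"
  proof (rule card_Un_disjoint)
    show "finite {q \<in> Hset M. 1 \<in># q}" using finite_Hset[of M] by simp
    show "{q \<in> Hset M. 1 \<in># q} \<inter> H1set_one M = {}"
      by (auto simp: Hset_def H1set_one_def)
  qed (rule finite_H1set_one)
  finally show ?thesis .
qed

lemma card_H1set_one: "card (H1set_one (Suc n)) = fib n"
proof (induction n rule: fib.induct)
  case 1
  show ?case by (simp add: H1set_one_1[simplified])
next
  case 2
  have "{q \<in> Hset 1. 1 \<in># q} = {{#1#}}" unfolding Hset_1 by auto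
  then show ?case using card_H1set_one_Suc[of 1] H1set_one_1 by simp
next
  case (3 n)
  have "card {q \<in> Hset (Suc (Suc n)). 1 \<in># q} = card (Hset n)"
    unfolding Hset_with_one by (simp add: card_image inj_on_add_mset inj_on_subset[OF inj_shift])
  with 3 show ?case using card_H1set_one_Suc[of "Suc (Suc n)"] by (simp add: card_Hset)
qed

lemma g_eq: "g n = fib n + fib_conv n"
proof (rule recurrence_unique[where a = g and b = "\<lambda>n. fib n + fib_conv n" and c = "\<lambda>n. fib (Suc n)"])
  show "g 0 = fib 0 + fib_conv 0" by (simp add: g_def Gset_0 fib_conv_def)
  show "g 1 = fib 1 + fib_conv 1" unfolding g_def Gset_1 by (simp add: fib_conv_def)
qed (simp_all add: g_Suc_Suc card_Gset fib_conv_Suc_Suc)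

lemma h_eq: "h (Suc n) = fib (Suc n) + fib_conv n"
proof (rule recurrence_unique[where a = "\<lambda>n. h (Suc n)" and b = "\<lambda>n. fib (Suc n) + fib_conv n"
      and c = "\<lambda>n. fib (Suc n)"])
  have "h 1 = 1" unfolding h_def Hset_1 by simp
  then show "h (Suc 0) = fib (Suc 0) + fib_conv 0" by (simp add: fib_conv_def)
  show "h (Suc 1) = fib (Suc 1) + fib_conv 1"
    using h_Suc_Suc[of 0] \<open>h 1 = 1\<close> by (simp add: h_def Hset_0 fib_conv_def)
qed (simp_all add: h_Suc_Suc card_Hset fib_conv_Suc_Suc)

lemma g1_eq: "g1 n = fib_conv n"
proof (rule recurrence_unique[where a = g1 and b = fib_conv and c = "\<lambda>n. fib (Suc n)"])
  show "g1 0 = fib_conv 0" "g1 1 = fib_conv 1"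
    unfolding g1_def G1set_0 G1set_1 by (simp_all add: fib_conv_def)
qed (simp_all add: g1_def card_G1set_Suc_Suc card_G1set_two fib_conv_Suc_Suc)

lemma h1_eq: "h1 n = fib_conv n"
proof (rule recurrence_unique[where a = h1 and b = fib_conv and c = "\<lambda>n. fib (Suc n)"])
  show "h1 0 = fib_conv 0" "h1 1 = fib_conv 1"
    unfolding h1_def H1set_0 H1set_1 by (simp_all add: fib_conv_def)
qed (simp_all add: h1_def card_H1set_Suc_Suc card_H1set_one fib_conv_Suc_Suc)

lemma int_fib_conv: "int (fib_conv n) = (\<Sum>k=1..n-1. int (fib k) * int (fib (n - k)))"
proof (cases n)
  case (Suc m)
  then have "{1..<n} = {1..n-1}" by auto
  then show ?thesis unfolding fib_conv_def by (simp add: of_nat_sum)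
qed (simp add: fib_conv_def)

theorem mainTheorem6:
  fixes M :: nat
  assumes "M \<ge> 2"
  shows "(int (g M) = int (fib M) + (\<Sum>k=1..M-1. int (fib k) * int (fib (M - k))))
    \<and> (int (h M) = int (fib M) + (\<Sum>k=1..M-2. int (fib k) * int (fib (M - 1 - k))))
    \<and> (int (g1 M) = (\<Sum>k=1..M-1. int (fib k) * int (fib (M - k))))
    \<and> (int (h1 M) = (\<Sum>k=1..M-1. int (fib k) * int (fib (M - k))))
    \<and> (int (g M) - int (h M) = int (g1 M) - int (g1 (M - 1)))
    \<and> (int (g1 M) - int (g1 (M - 1)) = int (h1 M) - int (h1 (M - 1)))
    \<and> (int (h1 M) - int (h1 (M - 1)) =
           int (fib (M - 1)) + (\<Sum>k=1..M-3. int (fib k) * int (fib (M - 2 - k))))"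
proof -
  obtain m where M: "M = Suc (Suc m)" using assms by (metis add_2_eq_Suc le_Suc_ex)
  show ?thesis
    using int_fib_conv[of "Suc (Suc m)"] int_fib_conv[of "Suc m"] int_fib_conv[of m]
      fib_conv_Suc_Suc[of m] h_eq[of "Suc m"]
    unfolding M by (simp add: g_eq g1_eq h1_eq)
qed

end
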